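(* Let $(K_n,\Sigma)$ be a signed complete graph, and let $\mathcal{C}$ be a set of signed graphs $(G,\Sigma')$ with $G$ a spanning subgraph of $K_n$ such that: (i) $(K_n,\Sigma')\in\mathcal{C}$ if and only if $\Sigma'=\Sigma$; (ii) for each $(G,\Sigma')\in\mathcal{C}$ with $G\neq K_n$, there is an edge $vw\in E(K_n)\setminus E(G)$ such that $(G+vw,\Sigma')\in\mathcal{C}$ or $(G+vw,\Sigma'\cup\{vw\})\in\mathcal{C}$; (iii) for each $(G,\Sigma')\in\mathcal{C}$ and each $vw\in E(G)$, $(G\setminus vw,\Sigma'\setminus\{vw\})\in\mathcal{C}$ if and only if spectral integral variation occurs under the addition of $vw$ to $(G\setminus vw,\Sigma'\setminus\{vw\})$ with the same parity as in $(K_n,\Sigma)$. Then a signed graph (with underlying graph a spanning subgraph of $K_n$) is integrally $\Sigma$-completable if and only if it belongs to $\mathcal{C}$.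
   Context: All graphs are finite and simple. A signed graph is a pair $(G,\Sigma)$ with $\Sigma\subseteq E(G)$; edges in $\Sigma$ are odd, others even. The signed Laplacian is $L(G,\Sigma)=D(G)-A(G,\Sigma)$, $D(G)$ the diagonal degree matrix, $A(G,\Sigma)$ having $(i,j)$-entry $1$ for an even edge, $-1$ for an odd edge, $0$ otherwise. Adding a new even (resp. odd) edge $vw$ to $(G,\Sigma)$ gives $(G+vw,\Sigma)$ (resp. $(G+vw,\Sigma\cup\{vw\})$); adding it "with the same parity as in $(K_n,\Sigma)$" means odd if $vw\in\Sigma$ and even otherwise. Spectral integral variation occurs if, with eigenvalues in nondecreasing order, corresponding eigenvalues of the signed Laplacians before and after differ by integers. $G\setminus vw$ is $G$ with edge $vw$ removed. A signed graph $(G,\Sigma')$ with $V(G)=V(K_n)$ is integrally $\Sigma$-completable if there is a sequence $(G_0,\Sigma_0)=(G,\Sigma'),\dots,(G_m,\Sigma_m)=(K_n,\Sigma)$ such that for each $i\in\{1,\dots,m\}$, $(G_i,\Sigma_i)$ is obtained from $(G_{i-1},\Sigma_{i-1})$ by adding a new (odd or even) edge $v_iw_i\in E(K_n)\setminus E(G_{i-1})$ under which spectral integral variation occurs. *)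

theory Defs
  imports "Jordan_Normal_Form.Char_Poly" "HOL-Library.Multiset"
begin

text \<open>Vertices of K_n are 0,...,n-1. An edge is a 2-element set of vertices.
  A signed graph is a pair (E, S) of its edge set E and its set S of odd edges (S a subset of E).\<close>

definition Kn_edges :: "nat \<Rightarrow> nat set set" where
  "Kn_edges n = {{i, j} | i j. i < n \<and> j < n \<and> i \<noteq> j}"

definition is_signed_spanning :: "nat \<Rightarrow> nat set set \<times> nat set set \<Rightarrow> bool" where
  "is_signed_spanning n GS = (fst GS \<subseteq> Kn_edges n \<and> snd GS \<subseteq> fst GS)"

definition degree_in :: "nat set set \<Rightarrow> nat \<Rightarrow> nat" where
  "degree_in E i = card {e \<in> E. i \<in> e}"

definition signed_adj :: "nat \<Rightarrow> nat set set \<times> nat set set \<Rightarrow> real mat" where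
  "signed_adj n GS = mat n n (\<lambda>(i, j).
     if i \<noteq> j \<and> {i, j} \<in> fst GS then (if {i, j} \<in> snd GS then -1 else 1) else 0)"

definition degree_mat :: "nat \<Rightarrow> nat set set \<Rightarrow> real mat" where
  "degree_mat n E = mat n n (\<lambda>(i, j). if i = j then real (degree_in E i) else 0)"

definition signed_laplacian :: "nat \<Rightarrow> nat set set \<times> nat set set \<Rightarrow> real mat" where
  "signed_laplacian n GS = degree_mat n (fst GS) - signed_adj n GS"

text \<open>Eigenvalues (with multiplicity) in nondecreasing order: the sorted list of roots of the
  characteristic polynomial. For a real symmetric matrix it has exactly n entries.\<close>
definition sorted_eigenvalues :: "real mat \<Rightarrow> real list" where
  "sorted_eigenvalues A = sorted_list_of_multiset (proots (char_poly A))"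

definition spectral_integral_variation ::
  "nat \<Rightarrow> nat set set \<times> nat set set \<Rightarrow> nat set set \<times> nat set set \<Rightarrow> bool" where
  "spectral_integral_variation n GS GS' =
    (let l = sorted_eigenvalues (signed_laplacian n GS);
         l' = sorted_eigenvalues (signed_laplacian n GS')
     in length l = length l' \<and> (\<forall>i < length l. l' ! i - l ! i \<in> \<int>))"

definition add_edge_step :: "nat \<Rightarrow> nat set set \<times> nat set set \<Rightarrow> nat set set \<times> nat set set \<Rightarrow> bool" where
  "add_edge_step n GS GS' =
    (\<exists>e \<in> Kn_edges n - fst GS.
       (GS' = (fst GS \<union> {e}, snd GS) \<or> GS' = (fst GS \<union> {e}, snd GS \<union> {e}))
       \<and> spectral_integral_variation n GS GS')"

definition integrally_completable ::
  "nat \<Rightarrow> nat set set \<Rightarrow> nat set set \<times> nat set set \<Rightarrow> bool" where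
  "integrally_completable n \<Sigma> GS =
    (\<exists>m (seq :: nat \<Rightarrow> nat set set \<times> nat set set). seq 0 = GS \<and> seq m = (Kn_edges n, \<Sigma>) \<and>
       (\<forall>i \<in> {1..m}. add_edge_step n (seq (i - 1)) (seq i)))"

end

theory Submission
  imports Defs
begin

text \<open>Conditions (i) and (ii) force every member \<open>(G, \<Sigma>')\<close> of \<open>C\<close> to carry the signs of \<open>\<Sigma>\<close>,
  i.e. \<open>\<Sigma>' = \<Sigma> \<inter> G\<close>, by downward induction on the number of missing edges. For graphs
  carrying these signs, condition (iii) says that a completion step into \<open>C\<close> starts in \<open>C\<close>
  exactly when it is a spectral integral variation. Hence \<open>C\<close> is closed under completion steps
  taken backwards from \<open>(K\<^sub>n, \<Sigma>)\<close>; conversely, (ii) provides from every member of \<open>C\<close>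
  a completion step to another member, and iterating reaches \<open>(K\<^sub>n, \<Sigma>)\<close>.\<close>

lemma finite_Kn_edges: "finite (Kn_edges n)"
proof -
  have "Kn_edges n \<subseteq> Pow {..<n}"
    unfolding Kn_edges_def by auto
  then show ?thesis
    by (rule finite_subset) simp
qed

lemma finite_subset_downward_induct [consumes 2, case_names top extend]:
  assumes "finite U" "G \<subseteq> U"
    and top: "P U"
    and extend: "\<And>G. G \<subset> U \<Longrightarrow> (\<And>e. e \<in> U - G \<Longrightarrow> P (insert e G)) \<Longrightarrow> P G"
  shows "P G"
proof -
  have "finite (U - G)"
    using assms(1) by simp
  then have "P (U - (U - G))"
  proof (induction rule: finite_remove_induct)
    case empty
    show ?case
      using top by simp
  next
    case (remove A)
    show ?case
    proof (rule extend)
      show "U - A \<subset> U"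
        using remove.hyps by blast
      fix e assume "e \<in> U - (U - A)"
      then have "insert e (U - A) = U - (A - {e})"
        by blast
      then show "P (insert e (U - A))"
        using remove.IH \<open>e \<in> U - (U - A)\<close> by simp
    qed
  qed
  then show ?thesis
    using assms(2) by (simp add: double_diff)
qed

lemma integrally_completable_iff_rtranclp:
  "integrally_completable n \<Sigma> GS \<longleftrightarrow> (add_edge_step n)\<^sup>*\<^sup>* GS (Kn_edges n, \<Sigma>)"
proof -
  have shift: "(\<forall>i \<in> {1..m}. add_edge_step n (seq (i - 1)) (seq i)) \<longleftrightarrow>
      (\<forall>i < m. add_edge_step n (seq i) (seq (Suc i)))" for m and seq :: "nat \<Rightarrow> _"
    unfolding image_Suc_lessThan[symmetric] by auto
  show ?thesis
    unfolding integrally_completable_def rtranclp_power relpowp_fun_conv shift by blast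
qed

lemma add_edge_step_is_signed_spanning:
  "add_edge_step n GS GS' \<Longrightarrow> is_signed_spanning n GS \<Longrightarrow> is_signed_spanning n GS'"
  unfolding is_signed_spanning_def add_edge_step_def by auto

lemma add_edge_step_insert_iff:
  assumes e: "e \<in> Kn_edges n - G"
  shows "add_edge_step n (G, S) (insert e G, S') \<longleftrightarrow>
    (S' = S \<or> S' = insert e S) \<and> spectral_integral_variation n (G, S) (insert e G, S')"
proof
  assume "add_edge_step n (G, S) (insert e G, S')"
  then obtain e' where e': "e' \<in> Kn_edges n - G" "insert e G = insert e' G"
    and "S' = S \<or> S' = insert e' S" "spectral_integral_variation n (G, S) (insert e G, S')"
    unfolding add_edge_step_def by auto
  moreover have "e' = e"
    using e e' by blast
  ultimately show "(S' = S \<or> S' = insert e S) \<and> spectral_integral_variation n (G, S) (insert e G, S')"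
    by blast
next
  assume "(S' = S \<or> S' = insert e S) \<and> spectral_integral_variation n (G, S) (insert e G, S')"
  with e show "add_edge_step n (G, S) (insert e G, S')"
    unfolding add_edge_step_def by auto
qed

locale integral_completion_class =
  fixes n :: nat and \<Sigma> :: "nat set set" and C :: "(nat set set \<times> nat set set) set"
  assumes Sigma_subset: "\<Sigma> \<subseteq> Kn_edges n"
    and mem_spanning: "GS \<in> C \<Longrightarrow> is_signed_spanning n GS"
    and complete_mem_iff: "\<Sigma>' \<subseteq> Kn_edges n \<Longrightarrow> (Kn_edges n, \<Sigma>') \<in> C \<longleftrightarrow> \<Sigma>' = \<Sigma>"
    and mem_extendable: "(G, \<Sigma>') \<in> C \<Longrightarrow> G \<noteq> Kn_edges n \<Longrightarrow>
      \<exists>e \<in> Kn_edges n - G. (G \<union> {e}, \<Sigma>') \<in> C \<or> (G \<union> {e}, \<Sigma>' \<union> {e}) \<in> C"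
    and delete_mem_iff: "(G, \<Sigma>') \<in> C \<Longrightarrow> e \<in> G \<Longrightarrow>
      (G - {e}, \<Sigma>' - {e}) \<in> C \<longleftrightarrow>
      spectral_integral_variation n (G - {e}, \<Sigma>' - {e})
        (G, (\<Sigma>' - {e}) \<union> (if e \<in> \<Sigma> then {e} else {}))"
begin

lemma mem_complete: "(Kn_edges n, \<Sigma>) \<in> C"
  using complete_mem_iff Sigma_subset by blast

lemma mem_imp_edges_subset: "(G, S) \<in> C \<Longrightarrow> G \<subseteq> Kn_edges n"
  and mem_imp_signs_subset: "(G, S) \<in> C \<Longrightarrow> S \<subseteq> G"
  using mem_spanning[of "(G, S)"] by (simp_all add: is_signed_spanning_def)

lemma mem_imp_signs_eq:
  assumes "(G, S) \<in> C"
  shows "S = \<Sigma> \<inter> G"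
proof -
  have "G \<subseteq> Kn_edges n"
    using assms by (rule mem_imp_edges_subset)
  with finite_Kn_edges have "\<forall>S. (G, S) \<in> C \<longrightarrow> S = \<Sigma> \<inter> G"
  proof (induction rule: finite_subset_downward_induct)
    case top
    show ?case
    proof (intro allI impI)
      fix S assume mem: "(Kn_edges n, S) \<in> C"
      then have "S \<subseteq> Kn_edges n"
        by (rule mem_imp_signs_subset)
      with mem have "S = \<Sigma>"
        using complete_mem_iff by simp
      then show "S = \<Sigma> \<inter> Kn_edges n"
        using Sigma_subset by blast
    qed
  next
    case (extend G)
    show ?case
    proof (intro allI impI)
      fix S assume GS: "(G, S) \<in> C"
      then obtain e S' where e: "e \<in> Kn_edges n - G"
        and S': "(insert e G, S') \<in> C" "S' = S \<or> S' = insert e S"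
        using mem_extendable extend.hyps by fastforce
      then have "S' = \<Sigma> \<inter> insert e G"
        using extend.IH by blast
      then show "S = \<Sigma> \<inter> G"
        using S'(2) e mem_imp_signs_subset[OF GS] by auto
    qed
  qed
  then show ?thesis
    using assms by blast
qed

lemma mem_iff_add_edge_step:
  assumes e: "e \<in> Kn_edges n - G" and mem: "(insert e G, \<Sigma> \<inter> insert e G) \<in> C"
  shows "(G, \<Sigma> \<inter> G) \<in> C \<longleftrightarrow> add_edge_step n (G, \<Sigma> \<inter> G) (insert e G, \<Sigma> \<inter> insert e G)"
proof -
  have "insert e G - {e} = G" "\<Sigma> \<inter> insert e G - {e} = \<Sigma> \<inter> G"
    "(\<Sigma> \<inter> G) \<union> (if e \<in> \<Sigma> then {e} else {}) = \<Sigma> \<inter> insert e G"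
    using e by auto
  then have "(G, \<Sigma> \<inter> G) \<in> C \<longleftrightarrow>
      spectral_integral_variation n (G, \<Sigma> \<inter> G) (insert e G, \<Sigma> \<inter> insert e G)"
    using delete_mem_iff[OF mem, of e] by simp
  moreover have "\<Sigma> \<inter> insert e G = \<Sigma> \<inter> G \<or> \<Sigma> \<inter> insert e G = insert e (\<Sigma> \<inter> G)"
    by auto
  ultimately show ?thesis
    using add_edge_step_insert_iff[OF e] by blast
qed

lemma mem_imp_completable:
  assumes "(G, S) \<in> C"
  shows "(add_edge_step n)\<^sup>*\<^sup>* (G, S) (Kn_edges n, \<Sigma>)"
proof -
  have "G \<subseteq> Kn_edges n"
    using assms by (rule mem_imp_edges_subset)
  with finite_Kn_edges
  have "(G, \<Sigma> \<inter> G) \<in> C \<longrightarrow> (add_edge_step n)\<^sup>*\<^sup>* (G, \<Sigma> \<inter> G) (Kn_edges n, \<Sigma>)"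
  proof (induction rule: finite_subset_downward_induct)
    case top
    then show ?case
      using Sigma_subset by (simp add: Int_absorb2)
  next
    case (extend G)
    show ?case
    proof
      assume GS: "(G, \<Sigma> \<inter> G) \<in> C"
      then obtain e S' where e: "e \<in> Kn_edges n - G" and S': "(insert e G, S') \<in> C"
        using mem_extendable extend.hyps by fastforce
      then have mem: "(insert e G, \<Sigma> \<inter> insert e G) \<in> C"
        using mem_imp_signs_eq[OF S'] by simp
      then have "add_edge_step n (G, \<Sigma> \<inter> G) (insert e G, \<Sigma> \<inter> insert e G)"
        using GS mem_iff_add_edge_step[OF e] by blast
      then show "(add_edge_step n)\<^sup>*\<^sup>* (G, \<Sigma> \<inter> G) (Kn_edges n, \<Sigma>)"
        using extend.IH[OF e] mem by (blast intro: converse_rtranclp_into_rtranclp)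
    qed
  qed
  then show ?thesis
    using assms mem_imp_signs_eq[OF assms] by simp
qed

lemma completable_imp_mem:
  assumes "(add_edge_step n)\<^sup>*\<^sup>* GS (Kn_edges n, \<Sigma>)" and "is_signed_spanning n GS"
  shows "GS \<in> C"
  using assms
proof (induction rule: converse_rtranclp_induct)
  case base
  show ?case by (rule mem_complete)
next
  case (step GS GS')
  obtain G S where GS: "GS = (G, S)"
    by fastforce
  with step.hyps(1) obtain e where e: "e \<in> Kn_edges n - G"
    and GS': "GS' = (insert e G, S) \<or> GS' = (insert e G, insert e S)"
    unfolding add_edge_step_def by auto
  have "GS' \<in> C"
    using step add_edge_step_is_signed_spanning by blast
  then have mem: "(insert e G, \<Sigma> \<inter> insert e G) \<in> C"
    and GS'_signs: "GS' = (insert e G, \<Sigma> \<inter> insert e G)"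
    using GS' mem_imp_signs_eq by auto
  moreover have "S \<subseteq> G"
    using step.prems GS by (simp add: is_signed_spanning_def)
  ultimately have "S = \<Sigma> \<inter> G"
    using GS' e by auto
  then show ?case
    using step.hyps(1) GS GS'_signs mem_iff_add_edge_step[OF e mem] by simp
qed

lemma integrally_completable_iff_mem:
  assumes "is_signed_spanning n GS"
  shows "integrally_completable n \<Sigma> GS \<longleftrightarrow> GS \<in> C"
  unfolding integrally_completable_iff_rtranclp
  using completable_imp_mem[OF _ assms] mem_imp_completable[of "fst GS" "snd GS"] by auto

end

theorem lemma3p9:
  fixes n :: nat and \<Sigma> :: "nat set set"
    and C :: "(nat set set \<times> nat set set) set"
  assumes sigma: "\<Sigma> \<subseteq> Kn_edges n"
    and C_graphs: "\<forall>GS \<in> C. is_signed_spanning n GS"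
    and i: "\<forall>\<Sigma>'. \<Sigma>' \<subseteq> Kn_edges n \<longrightarrow> ((Kn_edges n, \<Sigma>') \<in> C \<longleftrightarrow> \<Sigma>' = \<Sigma>)"
    and ii: "\<forall>G \<Sigma>'. (G, \<Sigma>') \<in> C \<and> G \<noteq> Kn_edges n \<longrightarrow>
              (\<exists>e \<in> Kn_edges n - G. (G \<union> {e}, \<Sigma>') \<in> C \<or> (G \<union> {e}, \<Sigma>' \<union> {e}) \<in> C)"
    and iii: "\<forall>G \<Sigma>'. \<forall>e \<in> G. (G, \<Sigma>') \<in> C \<longrightarrow>
              ((G - {e}, \<Sigma>' - {e}) \<in> C \<longleftrightarrow>
                spectral_integral_variation n (G - {e}, \<Sigma>' - {e})
                  (G, (\<Sigma>' - {e}) \<union> (if e \<in> \<Sigma> then {e} else {})))"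
  shows "\<forall>GS. is_signed_spanning n GS \<longrightarrow>
           (integrally_completable n \<Sigma> GS \<longleftrightarrow> GS \<in> C)"
proof -
  interpret integral_completion_class n \<Sigma> C
  proof
    show "\<Sigma> \<subseteq> Kn_edges n"
      by (fact sigma)
    show "is_signed_spanning n GS" if "GS \<in> C" for GS
      using C_graphs that by blast
    show "(Kn_edges n, \<Sigma>') \<in> C \<longleftrightarrow> \<Sigma>' = \<Sigma>" if "\<Sigma>' \<subseteq> Kn_edges n" for \<Sigma>'
      using i that by blast
    show "\<exists>e \<in> Kn_edges n - G. (G \<union> {e}, \<Sigma>') \<in> C \<or> (G \<union> {e}, \<Sigma>' \<union> {e}) \<in> C"
      if "(G, \<Sigma>') \<in> C" "G \<noteq> Kn_edges n" for G \<Sigma>'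
      using ii that by blast
  qed (rule iii[rule_format])
  show ?thesis
    using integrally_completable_iff_mem by blast
qed

end
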